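(* Let $G$ be a free group on $k\ge 2$ generators and let $\Phi$ be a uniformly continuous action of $G$ on a non-discrete metric space $\Omega$. (1) If for some $g\in G$ the homeomorphism $f_g$ is expansive (on $\Omega$), then $\Phi$ does not have the shadowing property. (2) If for some $g\in G$ with $g\neq e$ the homeomorphism $f_g$ does not have the shadowing property, then $\Phi$ does not have the shadowing property.
   Context: An action of a group $G$ on a metric space $(\Omega,\mathrm{dist})$ is a map $\Phi:G\times\Omega\to\Omega$ such that each $f_g=\Phi(g,\cdot)$ is a homeomorphism, $\Phi(e,x)=x$, and $\Phi(g_1g_2,x)=\Phi(g_1,\Phi(g_2,x))$. For a finitely generated $G$, the action is uniformly continuous if for some finite symmetric generating set $S$ (symmetric: $s\in S\Rightarrow s^{-1}\in S$) all maps $f_s$, $s\in S$, are uniformly continuous. Fix a finite symmetric generating set $S$ of $G$. For $d>0$, a family $\{y_g\}_{g\in G}\subset\Omega$ is a $d$-pseudotrajectory if $\mathrm{dist}(y_{sg},f_s(y_g))<d$ for all $s\in S$, $g\in G$. The action has the shadowing property if for every $\varepsilon>0$ there is $d>0$ such that for every $d$-pseudotrajectory $\{y_g\}$ there is $x_e\in\Omega$ with $\mathrm{dist}(y_g,f_g(x_e))<\varepsilon$ for all $g\in G$ (this does not depend on the choice of $S$). A homeomorphism $f$ of $\Omega$ has the shadowing property if the $\mathbb Z$-action $(j,x)\mapsto f^j(x)$ with generating set $\{1,-1\}$ has it, i.e. for every $\varepsilon>0$ there is $d>0$ such that every sequence $\{x_j\}_{j\in\mathbb Z}$ with $\mathrm{dist}(x_{j+1},f(x_j))<d$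 (equivalently, also controlling $\mathrm{dist}(x_{j-1},f^{-1}(x_j))$ as required by the symmetric generating set) admits $u$ with $\mathrm{dist}(x_j,f^j(u))<\varepsilon$ for all $j$. The homeomorphism $f$ is expansive on $\Omega$ if there is $\Delta>0$ such that $\mathrm{dist}(f^j(x_1),f^j(x_2))<\Delta$ for all $j\in\mathbb Z$ implies $x_1=x_2$. *)

theory Defs
  imports "HOL-Analysis.Analysis" "HOL-Algebra.Generated_Groups"
begin

text \<open>A letter (i, True) stands for the generator a_i, (i, False) for its inverse.\<close>
type_synonym letter = "nat \<times> bool"
type_synonym word = "letter list"

definition inv_letter :: "letter \<Rightarrow> letter" where
  "inv_letter a = (fst a, \<not> snd a)"

fun reduced :: "word \<Rightarrow> bool" where
  "reduced [] = True"
| "reduced [a] = True"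
| "reduced (a # b # w) = (b \<noteq> inv_letter a \<and> reduced (b # w))"

fun cons_red :: "letter \<Rightarrow> word \<Rightarrow> word" where
  "cons_red a [] = [a]"
| "cons_red a (b # w) = (if b = inv_letter a then w else a # b # w)"

definition word_mult :: "word \<Rightarrow> word \<Rightarrow> word" where
  "word_mult u v = foldr cons_red u v"

definition free_group :: "nat \<Rightarrow> word monoid" where
  "free_group k = \<lparr> carrier = {w. reduced w \<and> (\<forall>a \<in> set w. fst a < k)},
                    mult = word_mult, one = [] \<rparr>"

definition is_action :: "('g, 'm) monoid_scheme \<Rightarrow> ('g \<Rightarrow> 'a::metric_space \<Rightarrow> 'a) \<Rightarrow> bool" where
  "is_action G \<Phi> \<longleftrightarrow>
     (\<forall>g \<in> carrier G. \<exists>h. homeomorphism UNIV UNIV (\<Phi> g) h) \<and>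
     (\<forall>x. \<Phi> \<one>\<^bsub>G\<^esub> x = x) \<and>
     (\<forall>g1 \<in> carrier G. \<forall>g2 \<in> carrier G. \<forall>x. \<Phi> (g1 \<otimes>\<^bsub>G\<^esub> g2) x = \<Phi> g1 (\<Phi> g2 x))"

definition sym_gen_set :: "('g, 'm) monoid_scheme \<Rightarrow> 'g set \<Rightarrow> bool" where
  "sym_gen_set G S \<longleftrightarrow> finite S \<and> S \<subseteq> carrier G \<and>
     (\<forall>s \<in> S. inv\<^bsub>G\<^esub> s \<in> S) \<and> generate G S = carrier G"

definition unif_cont_action :: "('g, 'm) monoid_scheme \<Rightarrow> ('g \<Rightarrow> 'a::metric_space \<Rightarrow> 'a) \<Rightarrow> bool" where
  "unif_cont_action G \<Phi> \<longleftrightarrow>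
     (\<exists>S. sym_gen_set G S \<and> (\<forall>s \<in> S. uniformly_continuous_on UNIV (\<Phi> s)))"

definition pseudotrajectory ::
  "('g, 'm) monoid_scheme \<Rightarrow> 'g set \<Rightarrow> ('g \<Rightarrow> 'a::metric_space \<Rightarrow> 'a) \<Rightarrow> real \<Rightarrow> ('g \<Rightarrow> 'a) \<Rightarrow> bool" where
  "pseudotrajectory G S \<Phi> d y \<longleftrightarrow>
     (\<forall>s \<in> S. \<forall>g \<in> carrier G. dist (y (s \<otimes>\<^bsub>G\<^esub> g)) (\<Phi> s (y g)) < d)"

definition action_shadowing ::
  "('g, 'm) monoid_scheme \<Rightarrow> 'g set \<Rightarrow> ('g \<Rightarrow> 'a::metric_space \<Rightarrow> 'a) \<Rightarrow> bool" where
  "action_shadowing G S \<Phi> \<longleftrightarrow>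
     (\<forall>\<epsilon>>0. \<exists>d>0. \<forall>y. pseudotrajectory G S \<Phi> d y \<longrightarrow>
        (\<exists>x. \<forall>g \<in> carrier G. dist (y g) (\<Phi> g x) < \<epsilon>))"

definition int_iter :: "('a \<Rightarrow> 'a) \<Rightarrow> int \<Rightarrow> 'a \<Rightarrow> 'a" where
  "int_iter f j = (if 0 \<le> j then f ^^ nat j else inv_into UNIV f ^^ nat (- j))"

text \<open>Shadowing of the Z-action generated by f, with generating set {1,-1}.\<close>
definition homeo_shadowing :: "('a::metric_space \<Rightarrow> 'a) \<Rightarrow> bool" where
  "homeo_shadowing f \<longleftrightarrow>
     (\<forall>\<epsilon>>0. \<exists>d>0. \<forall>x :: int \<Rightarrow> 'a.
        (\<forall>j. dist (x (j + 1)) (f (x j)) < d \<and> dist (x (j - 1)) (inv_into UNIV f (x j)) < d) \<longrightarrow>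
        (\<exists>u. \<forall>j. dist (x j) (int_iter f j u) < \<epsilon>))"

definition expansive :: "('a::metric_space \<Rightarrow> 'a) \<Rightarrow> bool" where
  "expansive f \<longleftrightarrow>
     (\<exists>\<Delta>>0. \<forall>x1 x2. (\<forall>j. dist (int_iter f j x1) (int_iter f j x2) < \<Delta>) \<longrightarrow> x1 = x2)"

definition non_discrete :: "'a::metric_space itself \<Rightarrow> bool" where
  "non_discrete _ \<longleftrightarrow> (\<exists>x::'a. x islimpt UNIV)"

end

theory Submission
  imports Defs
begin

text \<open>
  A nontrivial reduced word g is a conjugate p q p\<inverse> of a cyclically reduced word q, and
  expansivity and shadowing pass between \<Phi> g and \<Phi> q because \<Phi> p is uniformly continuous with
  uniformly continuous inverse; so it suffices to treat g = q.

  (1) Fix a letter r such that q^j r is reduced for all j \<in> \<int>, and a letter c other than r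
  and r\<inverse>. Whether a word ends in r changes under left multiplication by a generator only
  for words shorter than the generator, i.e. on a finite set. Following the orbit of x' on the words ending
  in r and that of a nearby point x0 elsewhere gives a pseudotrajectory. The words q^j r and
  q^j r c carry all iterates of \<Phi> q on the two sides, so by expansivity a shadowing point would
  equal both x' and x0.

  (2) Write every word as g = w q^n with the power suffix maximal (n \<in> \<int>). Left multiplication
  by a generator s leaves n unchanged unless w is shorter than about |s| + |q|, and then changes n
  and w by a bounded amount. A pseudo-orbit x of \<Phi> q thus yields the pseudotrajectory
  g \<mapsto> \<Phi> w (x n) of the action, and its shadowing point shadows x along the words q^n.
\<close>

section \<open>Reduced words\<close>

lemma inv_letter_inv_letter [simp]: "inv_letter (inv_letter a) = a"
  by (simp add: inv_letter_def)

lemma inv_letter_neq [simp]: "inv_letter a \<noteq> a" "a \<noteq> inv_letter a"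
  by (auto simp: inv_letter_def prod_eq_iff)

lemma fst_inv_letter [simp]: "fst (inv_letter a) = fst a"
  by (simp add: inv_letter_def)

lemma reduced_Cons: "reduced (a # w) \<longleftrightarrow> reduced w \<and> (w \<noteq> [] \<longrightarrow> hd w \<noteq> inv_letter a)"
  by (cases w) auto

lemma reduced_append:
  "reduced (u @ v) \<longleftrightarrow> reduced u \<and> reduced v \<and> (u \<noteq> [] \<longrightarrow> v \<noteq> [] \<longrightarrow> hd v \<noteq> inv_letter (last u))"
  by (induction u) (auto simp: reduced_Cons)

lemma reduced_word_mult: "reduced v \<Longrightarrow> reduced (word_mult u v)"
proof (induction u)
  case (Cons a u)
  then show ?case
    by (cases "word_mult u v") (auto simp: word_mult_def reduced_Cons)
qed (simp add: word_mult_def)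

lemma set_word_mult: "set (word_mult u v) \<subseteq> set u \<union> set v"
proof (induction u)
  case (Cons a u)
  then show ?case
    by (cases "word_mult u v") (auto simp: word_mult_def)
qed (simp add: word_mult_def)

lemma word_mult_eq_append: "reduced (u @ v) \<Longrightarrow> word_mult u v = u @ v"
proof (induction u)
  case (Cons a u)
  then have "word_mult u v = u @ v" by (simp add: reduced_Cons)
  with Cons.prems show ?case
    by (cases "u @ v") (auto simp: word_mult_def reduced_Cons)
qed (simp add: word_mult_def)

lemma cons_red_append_drop:
  "\<exists>p'. cons_red a (p @ v) = p' @ drop 1 v \<and> length p' \<le> length p + 2"
proof (cases p)
  case Nil
  then show ?thesis
  proof (cases v)
    case (Cons b v')
    then show ?thesis
      using Nil by (cases "b = inv_letter a") (auto intro: exI[of _ "[]"] exI[of _ "[a, b]"])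
  qed (auto intro: exI[of _ "[a]"])
next
  case (Cons b p')
  have v: "v = take 1 v @ drop 1 v" by simp
  show ?thesis
  proof (cases "b = inv_letter a")
    case True
    then show ?thesis
      using Cons by (intro exI[of _ "p' @ take 1 v"]) (subst v, auto)
  next
    case False
    then show ?thesis
      using Cons by (intro exI[of _ "a # b # p' @ take 1 v"]) (subst v, auto)
  qed
qed

lemma word_mult_eq_prefix_drop:
  "\<exists>p. word_mult s g = p @ drop (length s) g \<and> length p \<le> 2 * length s"
proof (induction s)
  case (Cons a s)
  then obtain p where p: "word_mult s g = p @ drop (length s) g" "length p \<le> 2 * length s"
    by blast
  obtain p' where "cons_red a (p @ drop (length s) g) = p' @ drop 1 (drop (length s) g)"
    "length p' \<le> length p + 2"
    using cons_red_append_drop by blast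
  with p show ?case
    by (intro exI[of _ p']) (simp add: word_mult_def add.commute)
qed (simp add: word_mult_def)

lemma length_word_mult: "length (word_mult s g) \<le> 2 * length s + length g"
  using word_mult_eq_prefix_drop[of s g] by auto

lemma word_mult_append_suffix:
  assumes "length s \<le> length w"
  shows "\<exists>p. word_mult s (w @ v) = (p @ drop (length s) w) @ v"
  using word_mult_eq_prefix_drop[of s "w @ v"] assms by auto

lemma last_word_mult:
  assumes "length s < length g"
  shows "word_mult s g \<noteq> [] \<and> last (word_mult s g) = last g"
  using word_mult_eq_prefix_drop[of s g] assms by (auto simp: last_drop)

definition word_inv :: "word \<Rightarrow> word" where
  "word_inv w = rev (map inv_letter w)"

lemma word_inv_simps [simp]:
  "word_inv [] = []" "word_inv (a # w) = word_inv w @ [inv_letter a]"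
  "word_inv (u @ v) = word_inv v @ word_inv u" "word_inv (word_inv w) = w"
  "length (word_inv w) = length w" "word_inv w = [] \<longleftrightarrow> w = []"
  by (auto simp: word_inv_def rev_map[symmetric] comp_def)

lemma set_word_inv: "set (word_inv w) = inv_letter ` set w"
  by (simp add: word_inv_def)

lemma last_word_inv: "w \<noteq> [] \<Longrightarrow> last (word_inv w) = inv_letter (hd w)"
  by (cases w) auto

lemma reduced_word_inv: "reduced w \<Longrightarrow> reduced (word_inv w)"
  by (induction w) (auto simp: reduced_Cons reduced_append last_word_inv)

lemma word_mult_word_inv_append: "reduced (word_inv w @ v) \<Longrightarrow> word_mult w (word_inv w @ v) = v"
  by (induction w arbitrary: v) (auto simp: word_mult_def)

lemma word_mult_word_inv: "reduced w \<Longrightarrow> word_mult w (word_inv w) = []"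
  using word_mult_word_inv_append[of w "[]"] reduced_word_inv by simp

section \<open>Powers of cyclically reduced words\<close>

definition cyclically_reduced :: "word \<Rightarrow> bool" where
  "cyclically_reduced q \<longleftrightarrow> q \<noteq> [] \<and> reduced (q @ q)"

lemma cyclically_reducedD:
  "cyclically_reduced q \<Longrightarrow> q \<noteq> []"
  "cyclically_reduced q \<Longrightarrow> reduced q"
  "cyclically_reduced q \<Longrightarrow> hd q \<noteq> inv_letter (last q)"
  by (auto simp: cyclically_reduced_def reduced_append)

lemma cyclically_reduced_word_inv: "cyclically_reduced q \<Longrightarrow> cyclically_reduced (word_inv q)"
  using reduced_word_inv[of "q @ q"] by (simp add: cyclically_reduced_def)

lemma reduced_conjugate_cyclically_reduced:
  "reduced h \<Longrightarrow> h \<noteq> [] \<Longrightarrow> \<exists>p q. h = p @ q @ word_inv p \<and> cyclically_reduced q"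
proof (induction h rule: length_induct)
  case (1 h)
  show ?case
  proof (cases "reduced (h @ h)")
    case True
    with "1.prems" show ?thesis
      by (intro exI[of _ "[]"] exI[of _ h]) (simp add: cyclically_reduced_def)
  next
    case False
    then have hd_last: "hd h = inv_letter (last h)"
      using "1.prems" by (auto simp: reduced_append)
    have "length h \<noteq> 1"
      using False by (auto simp: length_Suc_conv)
    then obtain a t where "h = a # t" "t \<noteq> []"
      using "1.prems" by (cases h) auto
    then obtain m where h: "h = a # m @ [inv_letter a]"
      using hd_last by (cases t rule: rev_cases) auto
    then have "m \<noteq> []"
      using "1.prems"(1) by auto
    have "reduced m" "length m < length h"
      using "1.prems"(1) h by (auto simp: reduced_Cons reduced_append)
    then obtain p q where "m = p @ q @ word_inv p" "cyclically_reduced q"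
      using "1.IH" \<open>m \<noteq> []\<close> by blast
    with h show ?thesis
      by (intro exI[of _ "a # p"] exI[of _ q]) simp
  qed
qed

definition word_pow :: "word \<Rightarrow> nat \<Rightarrow> word" where
  "word_pow c n = concat (replicate n c)"

lemma word_pow_0 [simp]: "word_pow c 0 = []"
  and word_pow_Suc: "word_pow c (Suc n) = c @ word_pow c n"
  by (simp_all add: word_pow_def)

lemma word_pow_add: "word_pow c (a + b) = word_pow c a @ word_pow c b"
  by (simp add: word_pow_def replicate_add)

lemma word_pow_Suc': "word_pow c (Suc n) = word_pow c n @ c"
  using word_pow_add[of c n 1] by (simp add: word_pow_def)

lemma length_word_pow [simp]: "length (word_pow c n) = n * length c"
  by (induction n) (simp_all add: word_pow_Suc)

lemma set_word_pow: "set (word_pow c n) \<subseteq> set c"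
  by (auto simp: word_pow_def)

lemma word_pow_eq_Nil_iff: "c \<noteq> [] \<Longrightarrow> word_pow c n = [] \<longleftrightarrow> n = 0"
  by (metis length_0_conv length_word_pow mult_is_0)

lemma hd_word_pow: "c \<noteq> [] \<Longrightarrow> 0 < n \<Longrightarrow> hd (word_pow c n) = hd c"
  by (cases n) (simp_all add: word_pow_Suc)

lemma last_word_pow: "c \<noteq> [] \<Longrightarrow> 0 < n \<Longrightarrow> last (word_pow c n) = last c"
  by (cases n) (simp_all add: word_pow_Suc')

lemma reduced_word_pow: "cyclically_reduced c \<Longrightarrow> reduced (word_pow c n)"
  by (induction n)
    (auto simp: word_pow_Suc reduced_append hd_word_pow word_pow_eq_Nil_iff dest: cyclically_reducedD)

definition word_int_pow :: "word \<Rightarrow> int \<Rightarrow> word" where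
  "word_int_pow q j = (if 0 \<le> j then word_pow q (nat j) else word_pow (word_inv q) (nat (- j)))"

lemma in_carrier_free_group: "w \<in> carrier (free_group k) \<longleftrightarrow> reduced w \<and> (\<forall>a\<in>set w. fst a < k)"
  by (simp add: free_group_def)

lemma one_free_group [simp]: "\<one>\<^bsub>free_group k\<^esub> = []"
  by (simp add: free_group_def)

lemma mult_free_group [simp]: "x \<otimes>\<^bsub>free_group k\<^esub> y = word_mult x y"
  by (simp add: free_group_def)

lemma append_in_carrier_free_groupD:
  "u @ v \<in> carrier (free_group k) \<Longrightarrow> u \<in> carrier (free_group k) \<and> v \<in> carrier (free_group k)"
  by (auto simp: in_carrier_free_group reduced_append)

lemma take_in_carrier_free_group:
  "w \<in> carrier (free_group k) \<Longrightarrow> take n w \<in> carrier (free_group k)"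
  using append_in_carrier_free_groupD[of "take n w" "drop n w"] by simp

lemma word_inv_in_carrier_free_group:
  "w \<in> carrier (free_group k) \<Longrightarrow> word_inv w \<in> carrier (free_group k)"
  by (auto simp: in_carrier_free_group reduced_word_inv set_word_inv)

lemma word_mult_in_carrier_free_group:
  "u \<in> carrier (free_group k) \<Longrightarrow> v \<in> carrier (free_group k) \<Longrightarrow>
    word_mult u v \<in> carrier (free_group k)"
  using set_word_mult[of u v] by (auto simp: in_carrier_free_group reduced_word_mult)

lemma word_pow_in_carrier_free_group:
  assumes "q \<in> carrier (free_group k)" "cyclically_reduced q"
  shows "word_pow q n \<in> carrier (free_group k)"
  using assms set_word_pow[of q n] reduced_word_pow[OF assms(2)]
  by (auto simp: in_carrier_free_group)

lemma word_int_pow_in_carrier_free_group: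
  assumes "q \<in> carrier (free_group k)" "cyclically_reduced q"
  shows "word_int_pow q j \<in> carrier (free_group k)"
  using assms word_pow_in_carrier_free_group word_inv_in_carrier_free_group
    cyclically_reduced_word_inv
  by (simp add: word_int_pow_def)

lemma finite_short_words_free_group: "finite {w \<in> carrier (free_group k). length w \<le> n}"
proof (rule finite_subset)
  show "{w \<in> carrier (free_group k). length w \<le> n} \<subseteq> {w. set w \<subseteq> {0..<k} \<times> UNIV \<and> length w \<le> n}"
    by (auto simp: in_carrier_free_group mem_Times_iff)
  show "finite {w. set w \<subseteq> {0..<k} \<times> (UNIV :: bool set) \<and> length w \<le> n}"
    by (rule finite_lists_length_le) simp
qed

section \<open>The longest power suffix of a word\<close>

definition pow_suffix_exp :: "word \<Rightarrow> word \<Rightarrow> nat" where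
  "pow_suffix_exp c g = (GREATEST j. \<exists>w. g = w @ word_pow c j)"

lemma le_length_if_word_pow_suffix: "c \<noteq> [] \<Longrightarrow> g = w @ word_pow c j \<Longrightarrow> j \<le> length g"
  by (cases c) auto

lemma pow_suffix_exp_ge:
  assumes "c \<noteq> []" "g = w @ word_pow c j"
  shows "j \<le> pow_suffix_exp c g"
  unfolding pow_suffix_exp_def
  by (rule Greatest_le_nat[of _ j "length g"]) (use assms le_length_if_word_pow_suffix in blast)+

lemma pow_suffix_exp_suffix: "c \<noteq> [] \<Longrightarrow> \<exists>w. g = w @ word_pow c (pow_suffix_exp c g)"
  unfolding pow_suffix_exp_def
  by (rule GreatestI_nat[of _ 0 "length g"]) (auto intro: le_length_if_word_pow_suffix)

lemma pow_suffix_exp_length: "c \<noteq> [] \<Longrightarrow> pow_suffix_exp c g * length c \<le> length g"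
  using pow_suffix_exp_suffix[of c g] by (metis le_add2 length_append length_word_pow)

lemma pow_suffix_exp_le_length: "c \<noteq> [] \<Longrightarrow> pow_suffix_exp c g \<le> length g"
  using pow_suffix_exp_suffix le_length_if_word_pow_suffix by blast

lemma pow_suffix_exp_word_pow: "c \<noteq> [] \<Longrightarrow> pow_suffix_exp c (word_pow c n) = n"
  using pow_suffix_exp_ge[of c "word_pow c n" "[]" n] pow_suffix_exp_length[of c "word_pow c n"]
  by simp

lemma append_eq_append_suffix:
  assumes "xs @ ys = zs @ c" "length c \<le> length ys"
  shows "\<exists>w. ys = w @ c"
proof -
  have "drop (length ys - length c) ys = drop (length (xs @ ys) - length c) (xs @ ys)"
    using assms(2) by simp
  also have "\<dots> = c"
    using assms(1) by simp
  finally show ?thesis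
    by (metis append_take_drop_id)
qed

text \<open>A longer power suffix of s g would reach into the part of w that s leaves untouched.\<close>
lemma pow_suffix_exp_word_mult_stable:
  assumes c: "c \<noteq> []" and g: "g = w @ word_pow c j" and j: "j = pow_suffix_exp c g"
    and w: "length s + length c \<le> length w"
  shows "pow_suffix_exp c (word_mult s g) = j"
proof (rule antisym)
  obtain p where sg: "word_mult s g = (p @ drop (length s) w) @ word_pow c j"
    using word_mult_append_suffix[of s w] g w by auto
  then show "j \<le> pow_suffix_exp c (word_mult s g)"
    by (rule pow_suffix_exp_ge[OF c])
  show "pow_suffix_exp c (word_mult s g) \<le> j"
  proof (rule ccontr)
    define J' where "J' = pow_suffix_exp c (word_mult s g)"
    assume "\<not> pow_suffix_exp c (word_mult s g) \<le> j"
    then have "j < J'" by (simp add: J'_def)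
    then have pow: "word_pow c J' = (word_pow c (J' - Suc j) @ c) @ word_pow c j"
      using word_pow_add[of c "J' - Suc j" "Suc j"] by (simp add: word_pow_Suc)
    obtain w'' where "word_mult s g = w'' @ word_pow c J'"
      using pow_suffix_exp_suffix[OF c] unfolding J'_def by blast
    then have "p @ drop (length s) w = (w'' @ word_pow c (J' - Suc j)) @ c"
      using sg pow by simp
    moreover have "length c \<le> length (drop (length s) w)"
      using w by simp
    ultimately obtain w4 where "drop (length s) w = w4 @ c"
      using append_eq_append_suffix by blast
    then have "g = (take (length s) w @ w4) @ word_pow c (Suc j)"
      using g by (metis append.assoc append_take_drop_id word_pow_Suc)
    then have "Suc j \<le> pow_suffix_exp c g"
      by (rule pow_suffix_exp_ge[OF c])
    then show False
      using j by simp
  qed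
qed

lemma exists_multiple_between:
  assumes "0 < m"
  shows "\<exists>a::nat. L < a * m \<and> a * m \<le> L + m \<and> a \<le> L + 1"
proof (intro exI conjI)
  have "L = L div m * m + L mod m" "L mod m < m"
    using assms by simp_all
  moreover have "(L div m + 1) * m = L div m * m + m"
    by simp
  ultimately show "L < (L div m + 1) * m" "(L div m + 1) * m \<le> L + m"
    by linarith+
  show "L div m + 1 \<le> L + 1"
    by (simp add: div_le_dividend)
qed

lemma pow_suffix_exp_word_mult_ge:
  assumes c: "c \<noteq> []" and g: "g = w @ word_pow c j" and a: "a \<le> j"
    and s: "length s \<le> length w + a * length c"
  shows "j - a \<le> pow_suffix_exp c (word_mult s g)"
proof -
  have "g = (w @ word_pow c a) @ word_pow c (j - a)"
    using g a word_pow_add[of c a "j - a"] by simp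
  moreover have "length s \<le> length (w @ word_pow c a)"
    using s by simp
  ultimately obtain p where
    "word_mult s g = (p @ drop (length s) (w @ word_pow c a)) @ word_pow c (j - a)"
    using word_mult_append_suffix by metis
  then show ?thesis
    by (rule pow_suffix_exp_ge[OF c])
qed

lemma pow_suffix_exp_word_mult_near:
  fixes L :: nat
  assumes c: "c \<noteq> []" and g: "g = w @ word_pow c j"
    and s: "length s \<le> L" and w: "length w < L + length c" and long: "4 * L + 4 * length c < length g"
  defines "J' \<equiv> pow_suffix_exp c (word_mult s g)"
  shows "0 < J'" "j \<le> J' + L + 1" "J' \<le> j + 3 * L + 1"
    "\<exists>w'. word_mult s g = w' @ word_pow c J' \<and> length w' \<le> 4 * L + 2 * length c"
proof -
  define m where "m = length c"
  have m: "1 \<le> m"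
    using c by (cases c) (auto simp: m_def)
  obtain a where a: "L < a * m" "a * m \<le> L + m" "a \<le> L + 1"
    using exists_multiple_between[of m L] m by auto
  have length_g: "length g = length w + j * m"
    using g by (simp add: m_def)
  have length_sg: "length (word_mult s g) \<le> 2 * L + length g"
    using length_word_mult[of s g] s by linarith
  have "a * m < j * m"
    using length_g long w a(2) unfolding m_def by linarith
  then have ja: "a < j"
    by (meson mult_less_cancel2)
  have lower: "j - a \<le> J'"
    unfolding J'_def using a(1) s ja by (intro pow_suffix_exp_word_mult_ge[OF c g]) (simp_all add: m_def)
  then show "0 < J'"
    using ja by linarith
  have Lm: "L \<le> L * m"
    using m by (metis mult.right_neutral mult_le_mono2)
  have "J' * m \<le> length (word_mult s g)"
    using pow_suffix_exp_length[OF c] by (simp add: J'_def m_def)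
  moreover have "(j + 3 * L + 2) * m = j * m + 3 * (L * m) + 2 * m"
    by (simp add: algebra_simps)
  ultimately have "J' * m < (j + 3 * L + 2) * m"
    using length_sg length_g w Lm unfolding m_def by linarith
  then show "J' \<le> j + 3 * L + 1"
    by (simp only: mult_less_cancel2) linarith
  show "j \<le> J' + L + 1"
    using lower a(3) by linarith
  obtain w' where w': "word_mult s g = w' @ word_pow c J'"
    using pow_suffix_exp_suffix[OF c] unfolding J'_def by blast
  have "(j - a) * m + a * m = j * m"
    using ja by (simp add: add_mult_distrib[symmetric])
  moreover have "(j - a) * m \<le> J' * m"
    using lower by (rule mult_le_mono1)
  moreover have "length w' + J' * m = length (word_mult s g)"
    using w' by (simp add: m_def)
  ultimately have "length w' \<le> 4 * L + 2 * m"
    using length_sg length_g w a(2) unfolding m_def by linarith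
  with w' show "\<exists>w'. word_mult s g = w' @ word_pow c J' \<and> length w' \<le> 4 * L + 2 * length c"
    by (auto simp: m_def)
qed

text \<open>g is split as tail_rest q g followed by its maximal power suffix, a power of q or of q\<inverse>
  (never both, by pow_suffix_exp_exclusive), with signed exponent tail_exp q g.\<close>
definition tail_exp :: "word \<Rightarrow> word \<Rightarrow> int" where
  "tail_exp q g = int (pow_suffix_exp q g) - int (pow_suffix_exp (word_inv q) g)"

definition tail_rest :: "word \<Rightarrow> word \<Rightarrow> word" where
  "tail_rest q g = take (length g - length q * (pow_suffix_exp q g + pow_suffix_exp (word_inv q) g)) g"

lemma tail_exp_word_inv: "tail_exp (word_inv q) g = - tail_exp q g"
  by (simp add: tail_exp_def)

lemma tail_rest_word_inv: "tail_rest (word_inv q) g = tail_rest q g"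
  by (simp add: tail_rest_def add.commute)

lemma word_int_pow_word_inv: "word_int_pow (word_inv q) (- j) = word_int_pow q j"
  by (simp add: word_int_pow_def)

lemma tail_rest_in_carrier_free_group:
  "g \<in> carrier (free_group k) \<Longrightarrow> tail_rest q g \<in> carrier (free_group k)"
  unfolding tail_rest_def by (rule take_in_carrier_free_group)

lemma length_tail_rest_le: "length (tail_rest q g) \<le> length g"
  by (simp add: tail_rest_def)

lemma pow_suffix_exp_exclusive:
  assumes q: "cyclically_reduced q"
  shows "pow_suffix_exp q g = 0 \<or> pow_suffix_exp (word_inv q) g = 0"
proof (rule ccontr)
  have q': "word_inv q \<noteq> []"
    using cyclically_reducedD(1)[OF q] by simp
  have last_g: "last g = last c" if "c \<noteq> []" "0 < pow_suffix_exp c g" for c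
    using pow_suffix_exp_suffix[OF that(1), of g] that
    by (metis last_appendR last_word_pow word_pow_eq_Nil_iff neq0_conv)
  assume "\<not> ?thesis"
  then have "last q = last (word_inv q)"
    using last_g[OF cyclically_reducedD(1)[OF q]] last_g[OF q'] by auto
  then show False
    using cyclically_reducedD[OF q] last_word_inv by (metis inv_letter_inv_letter)
qed

lemma tail_rest_append_pow_suffix:
  assumes "pow_suffix_exp (word_inv q) g = 0" "q \<noteq> []"
  shows "g = tail_rest q g @ word_pow q (pow_suffix_exp q g)"
proof -
  obtain w where w: "g = w @ word_pow q (pow_suffix_exp q g)"
    using pow_suffix_exp_suffix[OF assms(2)] by blast
  then have "length g - length q * pow_suffix_exp q g = length w"
    by (metis add_diff_cancel_right' length_append length_word_pow mult.commute)
  then have "tail_rest q g = w"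
    using assms(1) w by (simp add: tail_rest_def) (metis append_eq_conv_conj)
  with w show ?thesis
    by simp
qed

text \<open>Together with tail_exp_word_inv and tail_rest_word_inv, this reduces statements about
  tail_exp to the case of a nonnegative exponent.\<close>
lemma tail_exp_cases:
  assumes "cyclically_reduced q"
  obtains "pow_suffix_exp (word_inv q) g = 0"
  | "pow_suffix_exp (word_inv (word_inv q)) g = 0"
  using pow_suffix_exp_exclusive[OF assms, of g] by auto

lemma tail_rest_append_word_int_pow:
  assumes q: "cyclically_reduced q"
  shows "g = tail_rest q g @ word_int_pow q (tail_exp q g)"
proof -
  have *: "g = tail_rest q g @ word_int_pow q (tail_exp q g)"
    if "cyclically_reduced q" "pow_suffix_exp (word_inv q) g = 0" for q
    using that tail_rest_append_pow_suffix[of q g]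
    by (simp add: tail_exp_def word_int_pow_def cyclically_reduced_def)
  from q show ?thesis
  proof (cases rule: tail_exp_cases[of q g])
    case 2
    then show ?thesis
      using *[OF cyclically_reduced_word_inv[OF q]]
      by (simp add: tail_exp_word_inv tail_rest_word_inv word_int_pow_word_inv)
  qed (use * q in blast)
qed

lemma tail_exp_word_int_pow:
  assumes q: "cyclically_reduced q"
  shows "tail_exp q (word_int_pow q j) = j \<and> tail_rest q (word_int_pow q j) = []"
proof -
  have *: "tail_exp q (word_pow q n) = int n \<and> tail_rest q (word_pow q n) = []"
    if q: "cyclically_reduced q" for q n
  proof -
    have ne: "q \<noteq> []" "word_inv q \<noteq> []"
      using cyclically_reducedD(1)[OF q] by simp_all
    have n: "pow_suffix_exp q (word_pow q n) = n"
      by (rule pow_suffix_exp_word_pow[OF ne(1)])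
    have inv0: "pow_suffix_exp (word_inv q) (word_pow q n) = 0"
      using pow_suffix_exp_exclusive[OF q, of "word_pow q n"] n
        pow_suffix_exp_le_length[OF ne(2), of "word_pow q 0"] by (cases n) auto
    then have "word_pow q n = tail_rest q (word_pow q n) @ word_pow q n"
      using tail_rest_append_pow_suffix[OF inv0 ne(1)] n by simp
    then show ?thesis
      using n inv0 by (simp add: tail_exp_def)
  qed
  show ?thesis
  proof (cases "0 \<le> j")
    case True
    then show ?thesis
      using *[OF q, of "nat j"] by (simp add: word_int_pow_def)
  next
    case False
    then show ?thesis
      using *[OF cyclically_reduced_word_inv[OF q], of "nat (- j)"]
      by (simp add: word_int_pow_def tail_exp_word_inv tail_rest_word_inv)
  qed
qed

lemma abs_tail_exp_le:
  assumes "cyclically_reduced q"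
  shows "\<bar>tail_exp q g\<bar> \<le> int (length g)"
  using pow_suffix_exp_le_length[of q g] pow_suffix_exp_le_length[of "word_inv q" g]
    pow_suffix_exp_exclusive[OF assms, of g] cyclically_reducedD(1)[OF assms]
  by (auto simp: tail_exp_def)

lemma tail_exp_word_mult_stable:
  assumes q: "cyclically_reduced q" and long: "length s + length q \<le> length (tail_rest q g)"
  shows "tail_exp q (word_mult s g) = tail_exp q g"
proof -
  have *: "tail_exp q (word_mult s g) = tail_exp q g"
    if q: "cyclically_reduced q" and inv0: "pow_suffix_exp (word_inv q) g = 0"
      and long: "length s + length q \<le> length (tail_rest q g)" for q
  proof -
    have ne: "q \<noteq> []" "word_inv q \<noteq> []"
      using cyclically_reducedD(1)[OF q] by simp_all
    note g = tail_rest_append_pow_suffix[OF inv0 ne(1)]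
    have a: "pow_suffix_exp q (word_mult s g) = pow_suffix_exp q g"
      by (rule pow_suffix_exp_word_mult_stable[OF ne(1) g refl long])
    have "pow_suffix_exp (word_inv q) (word_mult s g) = 0"
    proof (cases "pow_suffix_exp q g = 0")
      case True
      then have "g = tail_rest q g @ word_pow (word_inv q) 0"
        using g by simp
      from pow_suffix_exp_word_mult_stable[OF ne(2) this] inv0 long show ?thesis
        by simp
    next
      case False
      then show ?thesis
        using a pow_suffix_exp_exclusive[OF q, of "word_mult s g"] by simp
    qed
    with a inv0 show ?thesis
      by (simp add: tail_exp_def)
  qed
  from q show ?thesis
  proof (cases rule: tail_exp_cases[of q g])
    case 2
    then show ?thesis
      using *[OF cyclically_reduced_word_inv[OF q]] long
      by (simp add: tail_exp_word_inv tail_rest_word_inv)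
  qed (use * q long in blast)
qed

lemma tail_exp_word_mult_jump_long:
  fixes L :: nat
  assumes q: "cyclically_reduced q" and inv0: "pow_suffix_exp (word_inv q) g = 0"
    and s: "length s \<le> L" and jump: "tail_exp q (word_mult s g) \<noteq> tail_exp q g"
    and long: "4 * L + 4 * length q < length g"
  shows "\<bar>tail_exp q (word_mult s g) - tail_exp q g\<bar> \<le> int (10 * L + 8 * length q)
    \<and> length (tail_rest q (word_mult s g)) \<le> 6 * L + 4 * length q"
proof -
  have ne: "q \<noteq> []"
    using cyclically_reducedD(1)[OF q] .
  have near: "length (tail_rest q g) < L + length q"
    using tail_exp_word_mult_stable[OF q, of s g] jump s by linarith
  define J' where "J' = pow_suffix_exp q (word_mult s g)"
  note bounds = pow_suffix_exp_word_mult_near[OF ne tail_rest_append_pow_suffix[OF inv0 ne] s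
      near long, folded J'_def]
  then have inv0': "pow_suffix_exp (word_inv q) (word_mult s g) = 0"
    using pow_suffix_exp_exclusive[OF q, of "word_mult s g"] unfolding J'_def by linarith
  obtain w' where w': "word_mult s g = w' @ word_pow q J'" "length w' \<le> 4 * L + 2 * length q"
    using bounds(4) by blast
  then have rest: "tail_rest q (word_mult s g) = w'"
    using tail_rest_append_pow_suffix[OF inv0' ne] unfolding J'_def by (metis append_same_eq)
  have diff: "tail_exp q (word_mult s g) - tail_exp q g = int J' - int (pow_suffix_exp q g)"
    using inv0 inv0' by (simp add: tail_exp_def J'_def)
  have "1 \<le> length q"
    using ne by (cases q) auto
  then show ?thesis
    unfolding rest diff abs_le_iff using bounds(2,3) w'(2) by (intro conjI) linarith+
qed

lemma tail_exp_word_mult_jump: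
  fixes L :: nat
  assumes q: "cyclically_reduced q" and s: "length s \<le> L"
    and jump: "tail_exp q (word_mult s g) \<noteq> tail_exp q g"
  shows "\<bar>tail_exp q (word_mult s g) - tail_exp q g\<bar> \<le> int (10 * L + 8 * length q)
    \<and> length (tail_rest q (word_mult s g)) \<le> 6 * L + 4 * length q"
proof (cases "length g \<le> 4 * L + 4 * length q")
  case True
  have "length (word_mult s g) \<le> 2 * L + length g"
    using length_word_mult[of s g] s by linarith
  with True show ?thesis
    using abs_tail_exp_le[OF q, of g] abs_tail_exp_le[OF q, of "word_mult s g"]
      length_tail_rest_le[of q "word_mult s g"]
    by linarith
next
  case False
  from q show ?thesis
  proof (cases rule: tail_exp_cases[of q g])
    case 1
    with tail_exp_word_mult_jump_long[OF q _ s jump] False show ?thesis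
      by simp
  next
    case 2
    moreover have "tail_exp (word_inv q) (word_mult s g) \<noteq> tail_exp (word_inv q) g"
      using jump by (simp add: tail_exp_word_inv)
    ultimately have "\<bar>tail_exp q g - tail_exp q (word_mult s g)\<bar> \<le> int (10 * L + 8 * length q)
        \<and> length (tail_rest q (word_mult s g)) \<le> 6 * L + 4 * length q"
      using tail_exp_word_mult_jump_long[OF cyclically_reduced_word_inv[OF q] _ s] False
      by (simp add: tail_exp_word_inv tail_rest_word_inv)
    then show ?thesis
      by (simp add: abs_minus_commute)
  qed
qed

section \<open>Integer iterates and pseudo-orbits\<close>

lemma int_iter_0 [simp]: "int_iter f 0 = id"
  by (simp add: int_iter_def)

lemma int_iter_succ:
  assumes "bij f"
  shows "int_iter f (j + 1) = f \<circ> int_iter f j"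
proof (cases "0 \<le> j")
  case True
  then have "nat (j + 1) = Suc (nat j)"
    by simp
  with True show ?thesis
    by (simp add: int_iter_def)
next
  case False
  let ?g = "inv_into UNIV f" and ?m = "nat (- (j + 1))"
  have "f \<circ> ?g = id"
    using assms by (simp add: bij_def surj_iff)
  moreover have "nat (- j) = Suc ?m"
    using False by simp
  then have "int_iter f j = ?g \<circ> ?g ^^ ?m"
    using False by (simp add: int_iter_def)
  moreover have "int_iter f (j + 1) = ?g ^^ ?m"
    using False by (simp add: int_iter_def)
  ultimately show ?thesis
    by (simp add: o_assoc)
qed

lemma int_iter_pred:
  assumes "bij f"
  shows "int_iter f (j - 1) = inv_into UNIV f \<circ> int_iter f j"
proof -
  have "inv_into UNIV f \<circ> f = id"
    using assms by (simp add: bij_def inj_iff)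
  then show ?thesis
    using int_iter_succ[OF assms, of "j - 1"] by (simp add: o_assoc)
qed

lemma int_iter_add:
  assumes "bij f"
  shows "int_iter f (a + b) = int_iter f a \<circ> int_iter f b"
proof (induction a rule: int_induct[where k = 0])
  case (step1 i)
  then show ?case
    using int_iter_succ[OF assms, of "i + b"] int_iter_succ[OF assms, of i]
    by (simp add: algebra_simps o_assoc)
next
  case (step2 i)
  then show ?case
    using int_iter_pred[OF assms, of "i + b"] int_iter_pred[OF assms, of i]
    by (simp add: algebra_simps o_assoc)
qed simp

lemma int_iter_uminus_cancel: "bij f \<Longrightarrow> int_iter f j (int_iter f (- j) x) = x"
  using int_iter_add[of f j "- j"] by (simp add: fun_eq_iff)

lemma int_iter_conjugate:
  assumes f: "bij f" and g: "bij g" and fb: "\<And>x. f (b x) = b (g x)"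
  shows "int_iter f j (b x) = b (int_iter g j x)"
proof (induction j arbitrary: x rule: int_induct[where k = 0])
  case (step1 i)
  then show ?case
    using fb by (simp add: int_iter_succ[OF f] int_iter_succ[OF g])
next
  case (step2 i)
  have "inv_into UNIV f (b y) = b (inv_into UNIV g y)" for y
    using fb[of "inv_into UNIV g y"] f g by (metis bij_def inv_f_f surj_f_inv_f)
  with step2 show ?case
    by (simp add: int_iter_pred[OF f] int_iter_pred[OF g])
qed simp

definition pseudo_orbit :: "('a::metric_space \<Rightarrow> 'a) \<Rightarrow> real \<Rightarrow> (int \<Rightarrow> 'a) \<Rightarrow> bool" where
  "pseudo_orbit f d x \<longleftrightarrow>
     (\<forall>j. dist (x (j + 1)) (f (x j)) < d \<and> dist (x (j - 1)) (inv_into UNIV f (x j)) < d)"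

lemma homeo_shadowing_iff:
  "homeo_shadowing f \<longleftrightarrow>
     (\<forall>\<epsilon>>0. \<exists>d>0. \<forall>x. pseudo_orbit f d x \<longrightarrow> (\<exists>u. \<forall>j. dist (x j) (int_iter f j u) < \<epsilon>))"
  by (simp add: homeo_shadowing_def pseudo_orbit_def)

lemma pseudo_orbit_mono: "pseudo_orbit f d x \<Longrightarrow> d \<le> d' \<Longrightarrow> pseudo_orbit f d' x"
  unfolding pseudo_orbit_def by (meson less_le_trans)

lemma uniformly_continuous_onD_UNIV:
  assumes "uniformly_continuous_on UNIV f" "0 < e"
  obtains d where "0 < d" "\<And>x y. dist x y < d \<Longrightarrow> dist (f x) (f y) < e"
  using assms unfolding uniformly_continuous_on_def by (metis UNIV_I dist_commute)

lemma uniformly_continuous_on_subset: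
  fixes f :: "'a::metric_space \<Rightarrow> 'b::metric_space"
  shows "uniformly_continuous_on B f \<Longrightarrow> A \<subseteq> B \<Longrightarrow> uniformly_continuous_on A f"
  unfolding uniformly_continuous_on_def by (meson subsetD)

lemma uniformly_continuous_on_UNIV_finite_family:
  assumes "finite W" "\<And>w. w \<in> W \<Longrightarrow> uniformly_continuous_on UNIV (f w)" "0 < e"
  obtains d where "0 < d" "\<And>w x y. w \<in> W \<Longrightarrow> dist x y < d \<Longrightarrow> dist (f w x) (f w y) < e"
proof -
  have "\<exists>d>0. \<forall>w\<in>W. \<forall>x y. dist x y < d \<longrightarrow> dist (f w x) (f w y) < e"
    using assms(1,2)
  proof (induction W rule: finite_induct)
    case (insert w W)
    obtain d1 where "0 < d1" "\<forall>v\<in>W. \<forall>x y. dist x y < d1 \<longrightarrow> dist (f v x) (f v y) < e"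
      using insert by auto
    moreover obtain d2 where "0 < d2" "\<And>x y. dist x y < d2 \<Longrightarrow> dist (f w x) (f w y) < e"
      using uniformly_continuous_onD_UNIV[OF insert.prems[of w] assms(3)] by auto
    ultimately show ?case
      by (intro exI[of _ "min d1 d2"]) auto
  qed (auto intro: exI[of _ 1])
  with that show ?thesis
    by blast
qed

lemma dist_image_triangle:
  assumes "dist a b < e" "\<And>a b. dist a b < e \<Longrightarrow> dist (f a) (f b) < \<eta> / 2"
    "dist c (f a) < \<eta> / 2"
  shows "dist c (f b) < \<eta>"
  using assms(2)[OF assms(1)] assms(3) dist_triangle[of c "f b" "f a"] by linarith

lemma pseudo_orbit_horizon_Suc:
  fixes F :: "'a::metric_space \<Rightarrow> 'a"
  defines "G \<equiv> inv_into UNIV F"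
  assumes bij: "bij F"
    and e: "\<And>a b. dist a b < e \<Longrightarrow> dist (F a) (F b) < \<eta> / 2"
      "\<And>a b. dist a b < e \<Longrightarrow> dist (G a) (G b) < \<eta> / 2"
    and x: "pseudo_orbit F (\<eta> / 2) x"
    and n: "\<And>i. \<bar>i\<bar> \<le> int n \<Longrightarrow> dist (x (j + i)) (int_iter F i (x j)) < min \<eta> e"
    and i: "\<bar>i\<bar> \<le> int (Suc n)"
  shows "dist (x (j + i)) (int_iter F i (x j)) < \<eta>"
proof -
  have step: "dist (x (j' + 1)) (F (x j')) < \<eta> / 2" "dist (x (j' - 1)) (G (x j')) < \<eta> / 2" for j'
    using x by (auto simp: pseudo_orbit_def G_def)
  consider "\<bar>i\<bar> \<le> int n" | "i = int n + 1" | "i = - int n - 1"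
    using i by linarith
  then show ?thesis
  proof cases
    case 1
    then show ?thesis
      using n by fastforce
  next
    case 2
    then have step_i: "dist (x (j + i)) (F (x (j + int n))) < \<eta> / 2"
      using step(1)[of "j + int n"] by (simp add: add.assoc dist_commute)
    have "dist (x (j + int n)) (int_iter F (int n) (x j)) < e"
      using n[of "int n"] by simp
    then have "dist (x (j + i)) (F (int_iter F (int n) (x j))) < \<eta>"
      by (rule dist_image_triangle[where f = F, OF _ e(1) step_i])
    with 2 show ?thesis
      using int_iter_succ[OF bij] by simp
  next
    case 3
    then have "x (j + i) = x (j - int n - 1)"
      by (intro arg_cong[of _ _ x]) simp
    then have step_i: "dist (x (j + i)) (G (x (j - int n))) < \<eta> / 2"
      using step(2)[of "j - int n"] by (simp add: dist_commute)
    have "dist (x (j - int n)) (int_iter F (- int n) (x j)) < e"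
      using n[of "- int n"] by simp
    then have "dist (x (j + i)) (G (int_iter F (- int n) (x j))) < \<eta>"
      by (rule dist_image_triangle[where f = G, OF _ e(2) step_i])
    with 3 show ?thesis
      using int_iter_pred[OF bij, of "- int n"] by (simp add: G_def)
  qed
qed

lemma pseudo_orbit_finite_horizon:
  fixes F :: "'a::metric_space \<Rightarrow> 'a"
  assumes bij: "bij F" and ucF: "uniformly_continuous_on UNIV F"
    and ucG: "uniformly_continuous_on UNIV (inv_into UNIV F)" and "0 < \<eta>"
  shows "\<exists>\<delta>>0. \<forall>x. pseudo_orbit F \<delta> x \<longrightarrow>
    (\<forall>j i. \<bar>i\<bar> \<le> int n \<longrightarrow> dist (x (j + i)) (int_iter F i (x j)) < \<eta>)"
  using \<open>0 < \<eta>\<close>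
proof (induction n arbitrary: \<eta>)
  case 0
  then show ?case
    by (intro exI[of _ 1]) auto
next
  case (Suc n)
  then have "0 < \<eta> / 2"
    by simp
  then obtain e1 e2 where "0 < e1" "\<And>a b. dist a b < e1 \<Longrightarrow> dist (F a) (F b) < \<eta> / 2"
    and "0 < e2"
      "\<And>a b. dist a b < e2 \<Longrightarrow> dist (inv_into UNIV F a) (inv_into UNIV F b) < \<eta> / 2"
    by (metis uniformly_continuous_onD_UNIV ucF ucG)
  note e = this
  then obtain d where d: "0 < d" "\<And>x. pseudo_orbit F d x \<Longrightarrow>
     \<forall>j i. \<bar>i\<bar> \<le> int n \<longrightarrow> dist (x (j + i)) (int_iter F i (x j)) < min \<eta> (min e1 e2)"
    using Suc.IH[of "min \<eta> (min e1 e2)"] Suc.prems by auto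
  show ?case
  proof (intro exI[of _ "min d (\<eta> / 2)"] conjI allI impI)
    fix x :: "int \<Rightarrow> 'a" and j i :: int
    assume x: "pseudo_orbit F (min d (\<eta> / 2)) x" and i: "\<bar>i\<bar> \<le> int (Suc n)"
    show "dist (x (j + i)) (int_iter F i (x j)) < \<eta>"
    proof (rule pseudo_orbit_horizon_Suc[OF bij, where e = "min e1 e2"])
      show "pseudo_orbit F (\<eta> / 2) x"
        using pseudo_orbit_mono[OF x] by simp
      show "dist (x (j + i')) (int_iter F i' (x j)) < min \<eta> (min e1 e2)" if "\<bar>i'\<bar> \<le> int n" for i'
        using d(2)[OF pseudo_orbit_mono[OF x]] that by simp
    qed (use e i in simp_all)
  qed (use d(1) Suc.prems in simp)
qed

section \<open>Conjugate homeomorphisms\<close>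

lemma expansive_conjugate:
  assumes F: "bij F" and H: "bij H" and conj: "\<And>x. H (B x) = B (F x)"
    and B: "inj B" "uniformly_continuous_on UNIV B" and exp: "expansive H"
  shows "expansive F"
proof -
  obtain \<Delta> where \<Delta>: "0 < \<Delta>"
    "\<And>x1 x2. (\<forall>j. dist (int_iter H j x1) (int_iter H j x2) < \<Delta>) \<Longrightarrow> x1 = x2"
    using exp unfolding expansive_def by blast
  obtain d where d: "0 < d" "\<And>x y. dist x y < d \<Longrightarrow> dist (B x) (B y) < \<Delta>"
    using uniformly_continuous_onD_UNIV[OF B(2) \<Delta>(1)] by blast
  have "x1 = x2" if "\<forall>j. dist (int_iter F j x1) (int_iter F j x2) < d" for x1 x2
  proof -
    have "B x1 = B x2"
      using that d(2) by (intro \<Delta>(2)) (simp add: int_iter_conjugate[where b = B, OF H F conj])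
    with B(1) show ?thesis
      by (simp add: inj_eq)
  qed
  with d(1) show ?thesis
    unfolding expansive_def by blast
qed

lemma homeo_shadowing_conjugate:
  assumes F: "bij F" and H: "bij H" and conj: "\<And>x. H (B x) = B (F x)"
    and inverse: "\<And>x. B' (B x) = x" "\<And>y. B (B' y) = y"
    and uc: "uniformly_continuous_on UNIV B" "uniformly_continuous_on UNIV B'"
    and sh: "homeo_shadowing F"
  shows "homeo_shadowing H"
  unfolding homeo_shadowing_iff
proof (intro allI impI)
  fix \<epsilon> :: real
  assume "0 < \<epsilon>"
  have conj': "F (B' y) = B' (H y)" for y
    using conj[of "B' y"] inverse by metis
  have inv_conj: "inv_into UNIV F (B' y) = B' (inv_into UNIV H y)" for y
    using int_iter_conjugate[where b = B', OF F H conj', of "-1"] by (simp add: int_iter_def)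
  obtain \<eta> where \<eta>: "0 < \<eta>" "\<And>x y. dist x y < \<eta> \<Longrightarrow> dist (B x) (B y) < \<epsilon>"
    using uniformly_continuous_onD_UNIV[OF uc(1) \<open>0 < \<epsilon>\<close>] by blast
  obtain d' where d': "0 < d'"
    "\<And>x. pseudo_orbit F d' x \<Longrightarrow> \<exists>u. \<forall>j. dist (x j) (int_iter F j u) < \<eta>"
    using sh \<eta>(1) unfolding homeo_shadowing_iff by meson
  obtain d where d: "0 < d" "\<And>x y. dist x y < d \<Longrightarrow> dist (B' x) (B' y) < d'"
    using uniformly_continuous_onD_UNIV[OF uc(2) d'(1)] by blast
  show "\<exists>d>0. \<forall>x. pseudo_orbit H d x \<longrightarrow> (\<exists>u. \<forall>j. dist (x j) (int_iter H j u) < \<epsilon>)"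
  proof (intro exI[of _ d] conjI allI impI)
    fix x
    assume "pseudo_orbit H d x"
    then have "pseudo_orbit F d' (B' \<circ> x)"
      using d(2) by (simp add: pseudo_orbit_def conj' inv_conj)
    then obtain u where u: "\<And>j. dist (B' (x j)) (int_iter F j u) < \<eta>"
      using d'(2) by fastforce
    have "dist (x j) (int_iter H j (B u)) < \<epsilon>" for j
      using \<eta>(2)[OF u[of j]] by (simp add: inverse(2) int_iter_conjugate[where b = B, OF H F conj])
    then show "\<exists>u. \<forall>j. dist (x j) (int_iter H j u) < \<epsilon>"
      by blast
  qed (rule d(1))
qed

section \<open>Shadowing of group actions\<close>

lemma is_action_one: "is_action G \<Phi> \<Longrightarrow> \<Phi> \<one>\<^bsub>G\<^esub> x = x"
  by (simp add: is_action_def)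

lemma is_action_mult:
  "is_action G \<Phi> \<Longrightarrow> g \<in> carrier G \<Longrightarrow> h \<in> carrier G \<Longrightarrow> \<Phi> (g \<otimes>\<^bsub>G\<^esub> h) x = \<Phi> g (\<Phi> h x)"
  by (simp add: is_action_def)

lemma is_action_continuous: "is_action G \<Phi> \<Longrightarrow> g \<in> carrier G \<Longrightarrow> continuous_on UNIV (\<Phi> g)"
  unfolding is_action_def homeomorphism_def by blast

lemma unif_cont_action_uniformly_continuous:
  assumes act: "is_action G \<Phi>" and uc: "unif_cont_action G \<Phi>" and g: "g \<in> carrier G"
  shows "uniformly_continuous_on UNIV (\<Phi> g)"
proof -
  obtain S where S: "sym_gen_set G S" "\<And>s. s \<in> S \<Longrightarrow> uniformly_continuous_on UNIV (\<Phi> s)"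
    using uc unfolding unif_cont_action_def by blast
  have "h \<in> carrier G \<and> uniformly_continuous_on UNIV (\<Phi> h)" if "h \<in> generate G S" for h
    using that
  proof (induction h rule: generate.induct)
    case one
    have "\<Phi> \<one>\<^bsub>G\<^esub> = id"
      using is_action_one[OF act] by auto
    with S(1) show ?case
      by (auto simp: sym_gen_set_def generate.one uniformly_continuous_on_id[unfolded id_def] id_def)
  next
    case (eng h1 h2)
    then have "\<Phi> (h1 \<otimes>\<^bsub>G\<^esub> h2) = \<Phi> h1 \<circ> \<Phi> h2"
      using is_action_mult[OF act] by auto
    moreover have "h1 \<otimes>\<^bsub>G\<^esub> h2 \<in> carrier G"
      using S(1) generate.eng[OF eng.hyps] by (simp add: sym_gen_set_def)
    ultimately show ?case
      using eng.IH uniformly_continuous_on_compose[of UNIV "\<Phi> h2" "\<Phi> h1"]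
      by (auto intro: uniformly_continuous_on_subset)
  qed (use S in \<open>auto simp: sym_gen_set_def\<close>)
  with S(1) g show ?thesis
    by (auto simp: sym_gen_set_def)
qed

lemma islimpt_UNIV_finite_continuous_close:
  fixes x :: "'a::metric_space" and f :: "'i \<Rightarrow> 'a \<Rightarrow> 'b::metric_space"
  assumes x: "x islimpt UNIV" and A: "finite A" and cont: "\<And>a. a \<in> A \<Longrightarrow> isCont (f a) x"
    and "0 < d"
  obtains x' where "x' \<noteq> x" "\<And>a. a \<in> A \<Longrightarrow> dist (f a x') (f a x) < d"
proof -
  have "eventually (\<lambda>y. \<forall>a\<in>A. dist (f a y) (f a x) < d) (at x)"
    using cont \<open>0 < d\<close> A by (auto simp: isCont_def tendsto_iff eventually_ball_finite)
  then obtain r where r: "0 < r" "\<And>y. 0 < dist y x \<Longrightarrow> dist y x < r \<Longrightarrow> \<forall>a\<in>A. dist (f a y) (f a x) < d"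
    unfolding eventually_at by auto
  obtain y where "y \<noteq> x" "dist y x < r"
    using x r(1) unfolding islimpt_approachable by blast
  with r(2)[of y] that show ?thesis
    by auto
qed

text \<open>The pseudotrajectory follows the orbit of a point x' near x0 on one side and the orbit of
  x0 on the other; continuity at x0 of the finitely many maps in E makes the seams small.\<close>
lemma not_action_shadowing_if_sides_separate_orbits:
  fixes \<Phi> :: "'g \<Rightarrow> 'a::metric_space \<Rightarrow> 'a" and side :: "'g \<Rightarrow> bool"
  assumes act: "is_action G \<Phi>" and S: "S \<subseteq> carrier G"
    and x0: "x0 islimpt (UNIV :: 'a set)" and exp: "expansive F"
    and E: "finite E" "E \<subseteq> carrier G"
    and side_change: "\<And>s g. s \<in> S \<Longrightarrow> g \<in> carrier G \<Longrightarrow> side (s \<otimes>\<^bsub>G\<^esub> g) \<noteq> side g \<Longrightarrow>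
      s \<otimes>\<^bsub>G\<^esub> g \<in> E"
    and a: "\<And>j. a j \<in> carrier G" "\<And>j. side (a j)" "\<And>j x. \<Phi> (a j) x = int_iter F j (A x)" "inj A"
    and b: "\<And>j. b j \<in> carrier G" "\<And>j. \<not> side (b j)" "\<And>j x. \<Phi> (b j) x = int_iter F j (B x)" "inj B"
  shows "\<not> action_shadowing G S \<Phi>"
proof
  assume "action_shadowing G S \<Phi>"
  obtain \<Delta> where \<Delta>: "0 < \<Delta>"
    "\<And>x1 x2. (\<forall>j. dist (int_iter F j x1) (int_iter F j x2) < \<Delta>) \<Longrightarrow> x1 = x2"
    using exp unfolding expansive_def by blast
  obtain d where d: "0 < d"
    "\<And>y. pseudotrajectory G S \<Phi> d y \<Longrightarrow> \<exists>z. \<forall>g\<in>carrier G. dist (y g) (\<Phi> g z) < \<Delta>"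
    using \<open>action_shadowing G S \<Phi>\<close> \<Delta>(1) unfolding action_shadowing_def by meson
  obtain x' where x': "x' \<noteq> x0" "\<And>h. h \<in> E \<Longrightarrow> dist (\<Phi> h x') (\<Phi> h x0) < d"
    using islimpt_UNIV_finite_continuous_close[OF x0 E(1) _ d(1), of \<Phi>]
      is_action_continuous[OF act] E(2) by (metis continuous_on_eq_continuous_at open_UNIV subsetD UNIV_I)
  define y where "y g = \<Phi> g (if side g then x' else x0)" for g
  have "pseudotrajectory G S \<Phi> d y"
    unfolding pseudotrajectory_def
  proof (intro ballI)
    fix s g
    assume s: "s \<in> S" and g: "g \<in> carrier G"
    have "\<Phi> s (\<Phi> g x) = \<Phi> (s \<otimes>\<^bsub>G\<^esub> g) x" for x
      using is_action_mult[OF act] s g S by auto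
    then show "dist (y (s \<otimes>\<^bsub>G\<^esub> g)) (\<Phi> s (y g)) < d"
      using side_change[OF s g] x'(2) d(1)
      by (cases "side (s \<otimes>\<^bsub>G\<^esub> g)"; cases "side g") (auto simp: y_def dist_commute)
  qed
  then obtain z where z: "\<And>g. g \<in> carrier G \<Longrightarrow> dist (y g) (\<Phi> g z) < \<Delta>"
    using d(2) by blast
  have "A x' = A z"
    using z[OF a(1)] a(2,3) by (intro \<Delta>(2)) (simp add: y_def)
  moreover have "B x0 = B z"
    using z[OF b(1)] b(2,3) by (intro \<Delta>(2)) (simp add: y_def)
  ultimately show False
    using x'(1) a(4) b(4) by (metis injD)
qed

lemma action_mult_split:
  fixes \<Phi> :: "'g \<Rightarrow> 'a::metric_space \<Rightarrow> 'a" and J :: "'g \<Rightarrow> int" and R :: "'g \<Rightarrow> 'g"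
  assumes act: "is_action G \<Phi>" and F: "bij F"
    and split: "\<And>g x. g \<in> carrier G \<Longrightarrow> \<Phi> g x = \<Phi> (R g) (int_iter F (J g) x)"
    and s: "s \<in> carrier G" and g: "g \<in> carrier G" and sg: "s \<otimes>\<^bsub>G\<^esub> g \<in> carrier G"
  shows "\<Phi> s (\<Phi> (R g) z) = \<Phi> (R (s \<otimes>\<^bsub>G\<^esub> g)) (int_iter F (J (s \<otimes>\<^bsub>G\<^esub> g) - J g) z)"
proof -
  define z' where "z' = int_iter F (- J g) z"
  have "\<Phi> s (\<Phi> (R g) z) = \<Phi> s (\<Phi> g z')"
    using split[OF g] int_iter_uminus_cancel[OF F] by (simp add: z'_def)
  also have "\<dots> = \<Phi> (s \<otimes>\<^bsub>G\<^esub> g) z'"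
    using is_action_mult[OF act s g] by simp
  also have "\<dots> = \<Phi> (R (s \<otimes>\<^bsub>G\<^esub> g)) (int_iter F (J (s \<otimes>\<^bsub>G\<^esub> g) - J g) z)"
    using split[OF sg] int_iter_add[OF F, of "J (s \<otimes>\<^bsub>G\<^esub> g)" "- J g"] by (simp add: z'_def)
  finally show ?thesis .
qed

text \<open>Away from the jumps of J the induced family is an exact trajectory.\<close>
lemma pseudotrajectory_of_pseudo_orbit:
  fixes \<Phi> :: "'g \<Rightarrow> 'a::metric_space \<Rightarrow> 'a" and J :: "'g \<Rightarrow> int" and R :: "'g \<Rightarrow> 'g"
  assumes act: "is_action G \<Phi>" and S: "S \<subseteq> carrier G"
    and closed: "\<And>s g. s \<in> S \<Longrightarrow> g \<in> carrier G \<Longrightarrow> s \<otimes>\<^bsub>G\<^esub> g \<in> carrier G"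
    and F: "bij F"
    and split: "\<And>g x. g \<in> carrier G \<Longrightarrow> \<Phi> g x = \<Phi> (R g) (int_iter F (J g) x)"
    and jump: "\<And>s g. s \<in> S \<Longrightarrow> g \<in> carrier G \<Longrightarrow> J (s \<otimes>\<^bsub>G\<^esub> g) \<noteq> J g \<Longrightarrow>
      \<bar>J (s \<otimes>\<^bsub>G\<^esub> g) - J g\<bar> \<le> int I \<and> R (s \<otimes>\<^bsub>G\<^esub> g) \<in> W"
    and W: "\<And>w a b. w \<in> W \<Longrightarrow> dist a b < \<eta> \<Longrightarrow> dist (\<Phi> w a) (\<Phi> w b) < d" and "0 < d"
    and close: "\<And>j i. \<bar>i\<bar> \<le> int I \<Longrightarrow> dist (x (j + i)) (int_iter F i (x j)) < \<eta>"
  shows "pseudotrajectory G S \<Phi> d (\<lambda>g. \<Phi> (R g) (x (J g)))"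
  unfolding pseudotrajectory_def
proof (intro ballI)
  fix s g
  assume s: "s \<in> S" and g: "g \<in> carrier G"
  let ?sg = "s \<otimes>\<^bsub>G\<^esub> g"
  have shift: "\<Phi> s (\<Phi> (R g) z) = \<Phi> (R ?sg) (int_iter F (J ?sg - J g) z)" for z
    using action_mult_split[OF act F split _ g closed[OF s g]] s S by blast
  show "dist (\<Phi> (R ?sg) (x (J ?sg))) (\<Phi> s (\<Phi> (R g) (x (J g)))) < d"
  proof (cases "J ?sg = J g")
    case True
    then show ?thesis
      using shift \<open>0 < d\<close> by simp
  next
    case False
    then have "\<bar>J ?sg - J g\<bar> \<le> int I" "R ?sg \<in> W"
      using jump[OF s g] by auto
    with shift show ?thesis
      using close[of "J ?sg - J g" "J g"] W by simp
  qed
qed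

text \<open>The shadowing point of the induced pseudotrajectory, read along the elements with
  R g = \<one>, shadows the pseudo-orbit.\<close>
lemma homeo_shadowing_if_action_shadowing:
  fixes \<Phi> :: "'g \<Rightarrow> 'a::metric_space \<Rightarrow> 'a" and J :: "'g \<Rightarrow> int" and R :: "'g \<Rightarrow> 'g"
  assumes act: "is_action G \<Phi>" and S: "S \<subseteq> carrier G"
    and closed: "\<And>s g. s \<in> S \<Longrightarrow> g \<in> carrier G \<Longrightarrow> s \<otimes>\<^bsub>G\<^esub> g \<in> carrier G"
    and sh: "action_shadowing G S \<Phi>"
    and F: "bij F" "uniformly_continuous_on UNIV F" "uniformly_continuous_on UNIV (inv_into UNIV F)"
    and split: "\<And>g x. g \<in> carrier G \<Longrightarrow> \<Phi> g x = \<Phi> (R g) (int_iter F (J g) x)"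
    and powers: "\<And>j. \<exists>g\<in>carrier G. J g = j \<and> R g = \<one>\<^bsub>G\<^esub>"
    and W: "finite W" "\<And>w. w \<in> W \<Longrightarrow> uniformly_continuous_on UNIV (\<Phi> w)"
    and jump: "\<And>s g. s \<in> S \<Longrightarrow> g \<in> carrier G \<Longrightarrow> J (s \<otimes>\<^bsub>G\<^esub> g) \<noteq> J g \<Longrightarrow>
      \<bar>J (s \<otimes>\<^bsub>G\<^esub> g) - J g\<bar> \<le> int I \<and> R (s \<otimes>\<^bsub>G\<^esub> g) \<in> W"
  shows "homeo_shadowing F"
  unfolding homeo_shadowing_iff
proof (intro allI impI)
  fix \<epsilon> :: real
  assume "0 < \<epsilon>"
  obtain d where d: "0 < d"
    "\<And>y. pseudotrajectory G S \<Phi> d y \<Longrightarrow> \<exists>z. \<forall>g\<in>carrier G. dist (y g) (\<Phi> g z) < \<epsilon>"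
    using sh \<open>0 < \<epsilon>\<close> unfolding action_shadowing_def by meson
  obtain \<eta> where \<eta>: "0 < \<eta>" "\<And>w a b. w \<in> W \<Longrightarrow> dist a b < \<eta> \<Longrightarrow> dist (\<Phi> w a) (\<Phi> w b) < d"
    using uniformly_continuous_on_UNIV_finite_family[of W "\<lambda>w. \<Phi> w", OF W d(1)] by blast
  obtain \<delta> where \<delta>: "0 < \<delta>" "\<And>x. pseudo_orbit F \<delta> x \<Longrightarrow>
      \<forall>j i. \<bar>i\<bar> \<le> int I \<longrightarrow> dist (x (j + i)) (int_iter F i (x j)) < \<eta>"
    using pseudo_orbit_finite_horizon[OF F \<eta>(1), of I] by blast
  show "\<exists>\<delta>>0. \<forall>x. pseudo_orbit F \<delta> x \<longrightarrow> (\<exists>u. \<forall>j. dist (x j) (int_iter F j u) < \<epsilon>)"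
  proof (intro exI[of _ \<delta>] conjI allI impI)
    fix x
    assume "pseudo_orbit F \<delta> x"
    then have "pseudotrajectory G S \<Phi> d (\<lambda>g. \<Phi> (R g) (x (J g)))"
      using \<delta>(2) by (intro pseudotrajectory_of_pseudo_orbit[OF act S closed F(1) split jump \<eta>(2) d(1)]) auto
    then obtain z where z: "\<And>g. g \<in> carrier G \<Longrightarrow> dist (\<Phi> (R g) (x (J g))) (\<Phi> g z) < \<epsilon>"
      using d(2) by blast
    have "dist (x j) (int_iter F j z) < \<epsilon>" for j
    proof -
      obtain g where "g \<in> carrier G" "J g = j" "R g = \<one>\<^bsub>G\<^esub>"
        using powers by blast
      then show ?thesis
        using z[of g] split[of g z] by (simp add: is_action_one[OF act])
    qed
    then show "\<exists>u. \<forall>j. dist (x j) (int_iter F j u) < \<epsilon>"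
      by blast
  qed (rule \<delta>(1))
qed

section \<open>Actions of the free group\<close>

lemma exists_letter_avoiding:
  assumes "2 \<le> k"
  obtains r :: letter where "fst r < k" "r \<noteq> a" "r \<noteq> b"
proof -
  have "\<exists>r\<in>{(0, True), (0, False), (1, True)}. r \<noteq> a \<and> r \<noteq> b"
    by (cases "a = (0, True)"; cases "b = (0, True)"; cases "a = (0, False)"; cases "b = (0, False)") auto
  then obtain r where "r \<in> {(0, True), (0, False), (1, True)}" "r \<noteq> a" "r \<noteq> b"
    by blast
  with assms that[of r] show ?thesis
    by auto
qed

lemma not_expansive_id:
  assumes "x0 islimpt (UNIV :: 'a::metric_space set)"
  shows "\<not> expansive (id :: 'a \<Rightarrow> 'a)"
proof
  assume "expansive (id :: 'a \<Rightarrow> 'a)"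
  then obtain \<Delta> where "0 < \<Delta>" "\<And>x1 x2 :: 'a. dist x1 x2 < \<Delta> \<Longrightarrow> x1 = x2"
    unfolding expansive_def by (auto simp: int_iter_def)
  with assms show False
    unfolding islimpt_approachable by blast
qed

locale free_group_action =
  fixes k :: nat and \<Phi> :: "word \<Rightarrow> 'a::metric_space \<Rightarrow> 'a"
  assumes action: "is_action (free_group k) \<Phi>"
begin

abbreviation (input) C where "C \<equiv> carrier (free_group k)"

lemma action_Nil [simp]: "\<Phi> [] x = x"
  using is_action_one[OF action] by simp

lemma action_word_mult: "u \<in> C \<Longrightarrow> v \<in> C \<Longrightarrow> \<Phi> (word_mult u v) x = \<Phi> u (\<Phi> v x)"
  using is_action_mult[OF action] by simp

lemma action_append:
  assumes "u @ v \<in> C"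
  shows "\<Phi> (u @ v) x = \<Phi> u (\<Phi> v x)"
proof -
  have "word_mult u v = u @ v"
    using assms by (simp add: in_carrier_free_group word_mult_eq_append)
  with action_word_mult[of u v x] append_in_carrier_free_groupD[OF assms] show ?thesis
    by simp
qed

lemma action_word_inv:
  assumes "w \<in> C"
  shows "\<Phi> w (\<Phi> (word_inv w) x) = x" "\<Phi> (word_inv w) (\<Phi> w x) = x"
proof -
  have "\<Phi> v (\<Phi> (word_inv v) x) = x" if "v \<in> C" for v x
    using action_word_mult[OF that word_inv_in_carrier_free_group[OF that]]
      word_mult_word_inv[of v] that by (simp add: in_carrier_free_group)
  from this[OF assms] this[OF word_inv_in_carrier_free_group[OF assms]]
  show "\<Phi> w (\<Phi> (word_inv w) x) = x" "\<Phi> (word_inv w) (\<Phi> w x) = x"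
    by simp_all
qed

lemma bij_action: "w \<in> C \<Longrightarrow> bij (\<Phi> w)"
  using action_word_inv by (intro bij_betw_byWitness[of _ "\<Phi> (word_inv w)"]) auto

lemma inv_into_action: "w \<in> C \<Longrightarrow> inv_into UNIV (\<Phi> w) = \<Phi> (word_inv w)"
  using action_word_inv bij_action by (metis bij_is_inj inv_f_f ext)

lemma action_word_pow:
  assumes "q \<in> C" "cyclically_reduced q"
  shows "\<Phi> (word_pow q n) = \<Phi> q ^^ n"
proof (induction n)
  case (Suc n)
  then show ?case
    using action_append[of q "word_pow q n"] word_pow_in_carrier_free_group[OF assms, of "Suc n"]
    by (simp add: fun_eq_iff word_pow_Suc)
qed (simp add: fun_eq_iff)

lemma action_word_int_pow:
  assumes "q \<in> C" "cyclically_reduced q"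
  shows "\<Phi> (word_int_pow q j) = int_iter (\<Phi> q) j"
  using action_word_pow[OF assms] inv_into_action[OF assms(1)]
    action_word_pow[OF word_inv_in_carrier_free_group cyclically_reduced_word_inv, OF assms]
  by (simp add: word_int_pow_def int_iter_def)

lemma action_tail_split:
  assumes "q \<in> C" "cyclically_reduced q" "g \<in> C"
  shows "\<Phi> g x = \<Phi> (tail_rest q g) (int_iter (\<Phi> q) (tail_exp q g) x)"
  using action_append[of "tail_rest q g" "word_int_pow q (tail_exp q g)"]
    tail_rest_append_word_int_pow[OF assms(2), of g] action_word_int_pow[OF assms(1,2)] assms(3)
  by simp

lemma word_int_pow_append_in_carrier:
  assumes q: "q \<in> C" "cyclically_reduced q"
    and u: "u \<in> C" "u \<noteq> []" "hd u \<noteq> inv_letter (last q)" "hd u \<noteq> hd q"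
  shows "word_int_pow q j @ u \<in> C"
proof -
  have "hd u \<noteq> inv_letter (last (word_int_pow q j))" if "word_int_pow q j \<noteq> []"
    using that u(3,4) cyclically_reducedD(1)[OF q(2)]
    by (auto simp: word_int_pow_def last_word_pow last_word_inv word_pow_eq_Nil_iff split: if_splits)
  then show ?thesis
    using word_int_pow_in_carrier_free_group[OF q, of j] u(1)
    by (auto simp: in_carrier_free_group reduced_append)
qed

lemma action_word_int_pow_append:
  assumes q: "q \<in> C" "cyclically_reduced q"
    and u: "u \<in> C" "u \<noteq> []" "hd u \<noteq> inv_letter (last q)" "hd u \<noteq> hd q"
  shows "\<Phi> (word_int_pow q j @ u) x = int_iter (\<Phi> q) j (\<Phi> u x)"
  using action_append[OF word_int_pow_append_in_carrier[OF q u]] action_word_int_pow[OF q] by simp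


lemma conjugate_cyclically_reduced:
  assumes "g \<in> C" "g \<noteq> []"
  obtains p q where "p \<in> C" "q \<in> C" "cyclically_reduced q"
    "\<And>x. \<Phi> g (\<Phi> p x) = \<Phi> p (\<Phi> q x)"
proof -
  obtain p q where g: "g = p @ q @ word_inv p" "cyclically_reduced q"
    using reduced_conjugate_cyclically_reduced[of g] assms by (auto simp: in_carrier_free_group)
  then have C: "p \<in> C" "q @ word_inv p \<in> C" "q \<in> C"
    using assms(1) append_in_carrier_free_groupD by blast+
  have "\<Phi> g (\<Phi> p x) = \<Phi> p (\<Phi> q x)" for x
    using action_append[of p "q @ word_inv p"] action_append[OF C(2)] action_word_inv(2)[OF C(1)]
      assms(1) g(1) by simp
  with that C(1,3) g(2) show ?thesis
    by blast
qed

lemma not_action_shadowing_if_expansive_cyclically_reduced: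
  assumes k: "2 \<le> k" and x0: "x0 islimpt (UNIV :: 'a set)"
    and S: "finite S" "S \<subseteq> C"
    and q: "q \<in> C" "cyclically_reduced q" and exp: "expansive (\<Phi> q)"
  shows "\<not> action_shadowing (free_group k) S \<Phi>"
proof -
  obtain r where r: "fst r < k" "r \<noteq> inv_letter (last q)" "r \<noteq> hd q"
    using exists_letter_avoiding[OF k] by blast
  obtain c where c: "fst c < k" "c \<noteq> r" "c \<noteq> inv_letter r"
    using exists_letter_avoiding[OF k] by blast
  have C: "[r] \<in> C" "[r, c] \<in> C"
    using r(1) c by (auto simp: in_carrier_free_group)
  obtain L where L: "\<And>s. s \<in> S \<Longrightarrow> length s \<le> L"
    using finite_nat_set_iff_bounded_le[of "length ` S"] S(1) by auto
  define side where "side g \<longleftrightarrow> g \<noteq> [] \<and> last g = r" for g :: word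
  show ?thesis
  proof (rule not_action_shadowing_if_sides_separate_orbits[OF action S(2) x0 exp])
    show "finite {h \<in> C. length h \<le> 3 * L}"
      by (rule finite_short_words_free_group)
    fix s g
    assume s: "s \<in> S" and g: "g \<in> C" and "side (s \<otimes>\<^bsub>free_group k\<^esub> g) \<noteq> side g"
    then have "length g \<le> length s"
      using last_word_mult[of s g] by (force simp: side_def)
    then have "length (word_mult s g) \<le> 3 * L"
      using length_word_mult[of s g] L[OF s] by linarith
    then show "s \<otimes>\<^bsub>free_group k\<^esub> g \<in> {h \<in> C. length h \<le> 3 * L}"
      using word_mult_in_carrier_free_group[OF subsetD[OF S(2) s] g] by simp
  next
    show "word_int_pow q j @ [r] \<in> C" "word_int_pow q j @ [r, c] \<in> C" for j
      using word_int_pow_append_in_carrier[OF q] C r by auto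
    show "side (word_int_pow q j @ [r])" "\<not> side (word_int_pow q j @ [r, c])" for j
      using c by (auto simp: side_def)
    show "\<Phi> (word_int_pow q j @ [r]) x = int_iter (\<Phi> q) j (\<Phi> [r] x)"
      "\<Phi> (word_int_pow q j @ [r, c]) x = int_iter (\<Phi> q) j (\<Phi> [r, c] x)" for j x
      using action_word_int_pow_append[OF q] C r by auto
    show "inj (\<Phi> [r])" "inj (\<Phi> [r, c])"
      using bij_action[OF C(1)] bij_action[OF C(2)] bij_is_inj by blast+
  qed auto
qed

lemma homeo_shadowing_if_action_shadowing_cyclically_reduced:
  assumes uc: "unif_cont_action (free_group k) \<Phi>"
    and S: "finite S" "S \<subseteq> C" and sh: "action_shadowing (free_group k) S \<Phi>"
    and q: "q \<in> C" "cyclically_reduced q"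
  shows "homeo_shadowing (\<Phi> q)"
proof -
  obtain L where L: "\<And>s. s \<in> S \<Longrightarrow> length s \<le> L"
    using finite_nat_set_iff_bounded_le[of "length ` S"] S(1) by auto
  have ucC: "uniformly_continuous_on UNIV (\<Phi> g)" if "g \<in> C" for g
    using unif_cont_action_uniformly_continuous[OF action uc that] .
  show ?thesis
  proof (rule homeo_shadowing_if_action_shadowing[OF action S(2) _ sh, where
        J = "tail_exp q" and R = "tail_rest q" and W = "{w \<in> C. length w \<le> 6 * L + 4 * length q}"
        and I = "10 * L + 8 * length q"])
    show "s \<otimes>\<^bsub>free_group k\<^esub> g \<in> C" if "s \<in> S" "g \<in> C" for s g
      using word_mult_in_carrier_free_group that S(2) by auto
    show "bij (\<Phi> q)" "uniformly_continuous_on UNIV (\<Phi> q)"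
      "uniformly_continuous_on UNIV (inv_into UNIV (\<Phi> q))"
      using bij_action[OF q(1)] ucC[OF q(1)] ucC[OF word_inv_in_carrier_free_group[OF q(1)]]
        inv_into_action[OF q(1)] by simp_all
    show "\<Phi> g x = \<Phi> (tail_rest q g) (int_iter (\<Phi> q) (tail_exp q g) x)" if "g \<in> C" for g x
      using action_tail_split[OF q that] .
    show "\<exists>g\<in>C. tail_exp q g = j \<and> tail_rest q g = \<one>\<^bsub>free_group k\<^esub>" for j
      using word_int_pow_in_carrier_free_group[OF q] tail_exp_word_int_pow[OF q(2)] by auto
    show "finite {w \<in> C. length w \<le> 6 * L + 4 * length q}"
      by (rule finite_short_words_free_group)
    show "uniformly_continuous_on UNIV (\<Phi> w)" if "w \<in> {w \<in> C. length w \<le> 6 * L + 4 * length q}" for w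
      using ucC that by blast
    fix s g
    assume s: "s \<in> S" and g: "g \<in> C"
      and "tail_exp q (s \<otimes>\<^bsub>free_group k\<^esub> g) \<noteq> tail_exp q g"
    then show "\<bar>tail_exp q (s \<otimes>\<^bsub>free_group k\<^esub> g) - tail_exp q g\<bar> \<le> int (10 * L + 8 * length q)
      \<and> tail_rest q (s \<otimes>\<^bsub>free_group k\<^esub> g) \<in> {w \<in> C. length w \<le> 6 * L + 4 * length q}"
      using tail_exp_word_mult_jump[OF q(2) L[OF s]] tail_rest_in_carrier_free_group
        word_mult_in_carrier_free_group[OF subsetD[OF S(2) s] g]
      by auto
  qed
qed

lemma not_action_shadowing_if_expansive:
  assumes k: "2 \<le> k" and x0: "x0 islimpt (UNIV :: 'a set)"
    and uc: "unif_cont_action (free_group k) \<Phi>" and S: "finite S" "S \<subseteq> C"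
    and g: "g \<in> C" "expansive (\<Phi> g)"
  shows "\<not> action_shadowing (free_group k) S \<Phi>"
proof (cases "g = []")
  case True
  moreover have "\<Phi> [] = id"
    by (simp add: fun_eq_iff)
  ultimately show ?thesis
    using g(2) not_expansive_id[OF x0] by simp
next
  case False
  then obtain p q where pq: "p \<in> C" "q \<in> C" "cyclically_reduced q"
    "\<And>x. \<Phi> g (\<Phi> p x) = \<Phi> p (\<Phi> q x)"
    using conjugate_cyclically_reduced g(1) by blast
  have "expansive (\<Phi> q)"
    using expansive_conjugate[where B = "\<Phi> p", OF bij_action[OF pq(2)] bij_action[OF g(1)] pq(4)]
      bij_is_inj[OF bij_action[OF pq(1)]] unif_cont_action_uniformly_continuous[OF action uc pq(1)]
      g(2) by blast
  then show ?thesis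
    using not_action_shadowing_if_expansive_cyclically_reduced[OF k x0 S pq(2,3)] by blast
qed

lemma homeo_shadowing_if_action_shadowing_nontrivial:
  assumes uc: "unif_cont_action (free_group k) \<Phi>"
    and S: "finite S" "S \<subseteq> C" and sh: "action_shadowing (free_group k) S \<Phi>"
    and g: "g \<in> C" "g \<noteq> []"
  shows "homeo_shadowing (\<Phi> g)"
proof -
  obtain p q where pq: "p \<in> C" "q \<in> C" "cyclically_reduced q"
    "\<And>x. \<Phi> g (\<Phi> p x) = \<Phi> p (\<Phi> q x)"
    using conjugate_cyclically_reduced g by blast
  show ?thesis
  proof (rule homeo_shadowing_conjugate[where B = "\<Phi> p", OF bij_action[OF pq(2)] bij_action[OF g(1)] pq(4)])
    show "\<Phi> (word_inv p) (\<Phi> p x) = x" "\<Phi> p (\<Phi> (word_inv p) x) = x" for x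
      using action_word_inv[OF pq(1)] by simp_all
    show "uniformly_continuous_on UNIV (\<Phi> p)" "uniformly_continuous_on UNIV (\<Phi> (word_inv p))"
      using unif_cont_action_uniformly_continuous[OF action uc] pq(1)
        word_inv_in_carrier_free_group by blast+
    show "homeo_shadowing (\<Phi> q)"
      by (rule homeo_shadowing_if_action_shadowing_cyclically_reduced[OF uc S sh pq(2,3)])
  qed
qed

end

theorem theorem4:
  fixes k :: nat and \<Phi> :: "word \<Rightarrow> 'a::metric_space \<Rightarrow> 'a" and S :: "word set"
  assumes "k \<ge> 2"
    and "is_action (free_group k) \<Phi>"
    and "unif_cont_action (free_group k) \<Phi>"
    and "non_discrete TYPE('a)"
    and "sym_gen_set (free_group k) S"
  shows "((\<exists>g \<in> carrier (free_group k). expansive (\<Phi> g))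
            \<longrightarrow> \<not> action_shadowing (free_group k) S \<Phi>)
       \<and> ((\<exists>g \<in> carrier (free_group k). g \<noteq> \<one>\<^bsub>free_group k\<^esub> \<and> \<not> homeo_shadowing (\<Phi> g))
            \<longrightarrow> \<not> action_shadowing (free_group k) S \<Phi>)"
proof -
  interpret free_group_action k \<Phi>
    by (rule free_group_action.intro) (rule assms(2))
  have S: "finite S" "S \<subseteq> C"
    using assms(5) by (auto simp: sym_gen_set_def)
  obtain x0 :: 'a where x0: "x0 islimpt UNIV"
    using assms(4) by (auto simp: non_discrete_def)
  show ?thesis
    using not_action_shadowing_if_expansive[OF assms(1) x0 assms(3) S]
      homeo_shadowing_if_action_shadowing_nontrivial[OF assms(3) S]
    by auto
qed

end
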